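(* For the calculi on $\mathbb F_2[e,x,y]$ associated to the six algebras (A)–(F) below, the numbers of quantum metrics are respectively $0,1,2,3,4,7$. In particular: for (B) the unique metric is $\mathrm de\otimes\mathrm de+\mathrm de\otimes\mathrm dx+\mathrm dx\otimes\mathrm de+\mathrm de\otimes\mathrm dy+\mathrm dy\otimes\mathrm de+\mathrm dx\otimes\mathrm dy+\mathrm dy\otimes\mathrm dx$; for (C) the metrics are $\mathrm de\otimes\mathrm dy+\mathrm dy\otimes\mathrm de+\mathrm dx\otimes\mathrm dx+\mathrm dx\otimes\mathrm dy+\mathrm dy\otimes\mathrm dx+\epsilon\,\mathrm dy\otimes\mathrm dy$, $\epsilon\in\{0,1\}$; for (D) the metrics are $\mathrm de\otimes\mathrm de+\mathrm de\otimes\mathrm dx+\mathrm dx\otimes\mathrm de+\mathrm de\otimes\mathrm dy+\mathrm dy\otimes\mathrm de+h$ with $h\in\{\mathrm dx\otimes\mathrm dx,\ \mathrm dx\otimes\mathrm dy+\mathrm dy\otimes\mathrm dx,\ \mathrm dy\otimes\mathrm dy\}$; for (E) the metrics are $\mathrm de\otimes\mathrm dy+\mathrm dy\otimes\mathrm de+\mathrm dx\otimes\mathrm dx+\epsilon_1(\mathrm dx\otimes\mathrm dy+\mathrm dy\otimes\mathrm dx)+\epsilon_2\mathrm dy\otimes\mathrm dy$, $\epsilon_1,\epsilon_2\in\{0,1\}$. The algebras (basis $e,x,y$, $e$ the unit): (A) $x\circ y=0$, $x\circ x=y\circ y=0$; (B) $x\circ y=0$, $x\circ x=x$, $y\circ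 y=y$; (C) $x\circ y=0$, $x\circ x=x$, $y\circ y=0$; (D) $x\circ y=x+y$, $x\circ x=y$, $y\circ y=x$; (E) $x\circ y=0$, $x\circ x=y$, $y\circ y=0$; (F) $x\circ y=x+y$, $x\circ x=e+x+y$, $y\circ y=x$.
   Context: Standing setup. Work over $\mathbb F_2$. Let $(V,\circ)$ be a commutative associative algebra over $\mathbb F_2$ with basis $x^1,\dots,x^n$ and structure constants $x^\mu\circ x^\nu=\sum_\rho V^{\mu\nu}{}_\rho x^\rho$. Let $A=\mathbb F_2[x^1,\dots,x^n]$ be the polynomial algebra on the same symbols. The associated differential calculus is the $A$-bimodule $\Omega^1$ which is free as a left $A$-module on $\mathrm dx^1,\dots,\mathrm dx^n$, with right action determined by $\mathrm dx^\mu\, x^\nu=x^\nu\,\mathrm dx^\mu+\sum_\rho V^{\mu\nu}{}_\rho\,\mathrm dx^\rho$, together with the unique map $\mathrm d:A\to\Omega^1$ satisfying the Leibniz rule, $\mathrm d(x^\mu)=\mathrm dx^\mu$, $\mathrm d1=0$. The bimodule $\Omega^1\otimes_A\Omega^1$ is free as a left module on $\mathrm dx^\mu\otimes\mathrm dx^\nu$. A quantum metric is $g=\sum_{\mu,\nu}g_{\mu\nu}\mathrm dx^\mu\otimes\mathrm dx^\nu$ with constants $g_{\mu\nu}\in\mathbb F_2$, $g_{\mu\nu}=g_{\nu\mu}$, the matrix $(g_{\mu\nu})$ invertible, and $g$ central: $x^\rho g=g x^\rho$ for all $\rho$. Here the basis is $x^1=e,x^2=x,x^3=y$. *)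

theory Defs
  imports Main "HOL-Library.Z2" "HOL-Library.Poly_Mapping" "HOL-Library.Function_Algebras"
begin

(* Basis indices: x^1 = e, x^2 = x, x^3 = y *)
datatype idx = Ie | Ix | Iy

lemma UNIV_idx: "(UNIV :: idx set) = {Ie, Ix, Iy}"
  using idx.exhaust by auto

instance idx :: finite
  by standard (simp add: UNIV_idx)

(* Structure constants over F_2 (type bit): V mu nu rho = coefficient of x^rho in x^mu o x^nu *)
type_synonym sconst = "idx \<Rightarrow> idx \<Rightarrow> idx \<Rightarrow> bit"

(* The polynomial algebra A = F_2[e,x,y]: finitely supported maps from monomials
   (exponent vectors idx =>0 nat) to coefficients in F_2 *)
type_synonym poly = "(idx \<Rightarrow>\<^sub>0 nat) \<Rightarrow>\<^sub>0 bit"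

definition Xv :: "idx \<Rightarrow> poly" where
  "Xv \<rho> = Poly_Mapping.single (Poly_Mapping.single \<rho> 1) 1"

definition cst :: "bit \<Rightarrow> poly" where
  "cst c = Poly_Mapping.single 0 c"

(* Elements of Omega^1: left coefficients w.r.t. dx^mu; elements of Omega^1 (x)_A Omega^1:
   left coefficients w.r.t. dx^mu (x) dx^nu *)
type_synonym omega1 = "idx \<Rightarrow> poly"
type_synonym omega2 = "idx \<Rightarrow> idx \<Rightarrow> poly"

(* dx^mu x^rho = x^rho dx^mu + sum_tau V^{mu rho}_tau dx^tau *)
definition dx_right :: "sconst \<Rightarrow> idx \<Rightarrow> idx \<Rightarrow> omega1" where
  "dx_right V \<mu> \<rho> = (\<lambda>\<tau>. (if \<tau> = \<mu> then Xv \<rho> else 0) + cst (V \<mu> \<rho> \<tau>))"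

(* Right action of the generator x^rho on Omega^1 (x)_A Omega^1:
   (a dx^mu (x) dx^nu) x^rho = a dx^mu (x) (dx^nu x^rho)
     = a (dx^mu x^rho) (x) dx^nu + sum_sigma a V^{nu rho}_sigma dx^mu (x) dx^sigma *)
definition tensor_right :: "sconst \<Rightarrow> omega2 \<Rightarrow> idx \<Rightarrow> omega2" where
  "tensor_right V T \<rho> = (\<lambda>\<tau> \<sigma>.
      (\<Sum>\<mu>\<in>UNIV. T \<mu> \<sigma> * dx_right V \<mu> \<rho> \<tau>)
    + (\<Sum>\<nu>\<in>UNIV. T \<tau> \<nu> * cst (V \<nu> \<rho> \<sigma>)))"

definition tensor_left :: "idx \<Rightarrow> omega2 \<Rightarrow> omega2" where
  "tensor_left \<rho> T = (\<lambda>\<tau> \<sigma>. Xv \<rho> * T \<tau> \<sigma>)"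

definition metric_tensor :: "(idx \<Rightarrow> idx \<Rightarrow> bit) \<Rightarrow> omega2" where
  "metric_tensor g = (\<lambda>\<mu> \<nu>. cst (g \<mu> \<nu>))"

definition invertible_mat :: "(idx \<Rightarrow> idx \<Rightarrow> bit) \<Rightarrow> bool" where
  "invertible_mat g \<longleftrightarrow> (\<exists>h. (\<forall>i k. (\<Sum>j\<in>UNIV. g i j * h j k) = (if i = k then 1 else 0))
                            \<and> (\<forall>i k. (\<Sum>j\<in>UNIV. h i j * g j k) = (if i = k then 1 else 0)))"

definition quantum_metric :: "sconst \<Rightarrow> (idx \<Rightarrow> idx \<Rightarrow> bit) \<Rightarrow> bool" where
  "quantum_metric V g \<longleftrightarrow>
     (\<forall>\<mu> \<nu>. g \<mu> \<nu> = g \<nu> \<mu>) \<and> invertible_mat g \<and>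
     (\<forall>\<rho>. tensor_left \<rho> (metric_tensor g) = tensor_right V (metric_tensor g) \<rho>)"

definition vec3 :: "bit \<Rightarrow> bit \<Rightarrow> bit \<Rightarrow> idx \<Rightarrow> bit" where
  "vec3 a b c = (\<lambda>\<rho>. case \<rho> of Ie \<Rightarrow> a | Ix \<Rightarrow> b | Iy \<Rightarrow> c)"

definition delta :: "idx \<Rightarrow> idx \<Rightarrow> bit" where
  "delta i = (\<lambda>\<rho>. if \<rho> = i then 1 else 0)"

definition mkalg :: "(idx \<Rightarrow> bit) \<Rightarrow> (idx \<Rightarrow> bit) \<Rightarrow> (idx \<Rightarrow> bit) \<Rightarrow> sconst" where
  "mkalg xx xy yy = (\<lambda>\<mu> \<nu>. case (\<mu>, \<nu>) of
       (Ie, _) \<Rightarrow> delta \<nu>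
     | (_, Ie) \<Rightarrow> delta \<mu>
     | (Ix, Ix) \<Rightarrow> xx
     | (Ix, Iy) \<Rightarrow> xy
     | (Iy, Ix) \<Rightarrow> xy
     | (Iy, Iy) \<Rightarrow> yy)"

(* mkalg (x o x) (x o y) (y o y); vectors as vec3 (coeff e) (coeff x) (coeff y) *)
definition algA :: sconst where "algA = mkalg (vec3 0 0 0) (vec3 0 0 0) (vec3 0 0 0)"
definition algB :: sconst where "algB = mkalg (vec3 0 1 0) (vec3 0 0 0) (vec3 0 0 1)"
definition algC :: sconst where "algC = mkalg (vec3 0 1 0) (vec3 0 0 0) (vec3 0 0 0)"
definition algD :: sconst where "algD = mkalg (vec3 0 0 1) (vec3 0 1 1) (vec3 0 1 0)"
definition algE :: sconst where "algE = mkalg (vec3 0 0 1) (vec3 0 0 0) (vec3 0 0 0)"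
definition algF :: sconst where "algF = mkalg (vec3 1 1 1) (vec3 1 1 0) (vec3 0 1 0)"

definition dd :: "idx \<Rightarrow> idx \<Rightarrow> idx \<Rightarrow> idx \<Rightarrow> bit" where
  "dd \<mu> \<nu> = (\<lambda>i j. if i = \<mu> \<and> j = \<nu> then 1 else 0)"

definition smul :: "bit \<Rightarrow> (idx \<Rightarrow> idx \<Rightarrow> bit) \<Rightarrow> idx \<Rightarrow> idx \<Rightarrow> bit" where
  "smul c f = (\<lambda>i j. c * f i j)"

end

theory Submission
  imports Defs
begin

text \<open>
  For a metric g with constant coefficients, the products x g and g x by a generator
  differ only by the constant tensor that the structure constants contribute when x is
  moved past dx \<otimes> dx, so centrality is a system of linear equations over F_2 in the
  entries of g. Over F_2 a 3 \<times> 3 matrix is invertible exactly when its determinant is 1.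
  A quantum metric is therefore a symmetric matrix, given by six bits, satisfying a
  decidable condition, and the metrics of each algebra are found by checking all
  64 candidates.
\<close>

(* Keep bit arithmetic in ring form, where algebra_simps and numeral evaluation apply. *)
declare add_bit_eq_xor [simp del] mult_bit_eq_and [simp del]

lemma UNIV_idx_sum: "(\<Sum>i\<in>UNIV. f i) = f Ie + f Ix + (f Iy :: 'a::comm_monoid_add)"
  by (simp add: UNIV_idx add.assoc)

lemma all_idx_iff: "(\<forall>i::idx. P i) \<longleftrightarrow> P Ie \<and> P Ix \<and> P Iy"
  by (metis idx.exhaust)

lemma ex_bit_iff: "(\<exists>b::bit. P b) \<longleftrightarrow> P 0 \<or> P 1"
  by (metis bit.exhaust)

lemma cst_add: "cst (a + b) = cst a + cst b"
  by (simp add: cst_def single_add)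

lemma cst_mult: "cst (a * b) = cst a * cst b"
  by (simp add: cst_def mult_single)

lemma cst_eq_0_iff: "cst a = 0 \<longleftrightarrow> a = 0"
  by (metis cst_def lookup_single_eq single_zero lookup_zero)

definition central_defect :: "sconst \<Rightarrow> (idx \<Rightarrow> idx \<Rightarrow> bit) \<Rightarrow> idx \<Rightarrow> idx \<Rightarrow> idx \<Rightarrow> bit" where
  "central_defect V g \<rho> \<tau> \<sigma> =
     (\<Sum>\<mu>\<in>UNIV. g \<mu> \<sigma> * V \<mu> \<rho> \<tau>) + (\<Sum>\<nu>\<in>UNIV. g \<tau> \<nu> * V \<nu> \<rho> \<sigma>)"

lemma tensor_right_metric_tensor:
  "tensor_right V (metric_tensor g) \<rho> \<tau> \<sigma> =
     Xv \<rho> * cst (g \<tau> \<sigma>) + cst (central_defect V g \<rho> \<tau> \<sigma>)"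
  by (cases \<tau>) (simp_all add: tensor_right_def metric_tensor_def dx_right_def
      central_defect_def UNIV_idx_sum cst_add cst_mult algebra_simps)

lemma metric_tensor_central_iff:
  "tensor_left \<rho> (metric_tensor g) = tensor_right V (metric_tensor g) \<rho> \<longleftrightarrow>
     (\<forall>\<tau> \<sigma>. central_defect V g \<rho> \<tau> \<sigma> = 0)"
proof -
  have "tensor_left \<rho> (metric_tensor g) \<tau> \<sigma> = Xv \<rho> * cst (g \<tau> \<sigma>)" for \<tau> \<sigma>
    by (simp add: tensor_left_def metric_tensor_def)
  then show ?thesis
    by (simp add: fun_eq_iff tensor_right_metric_tensor cst_eq_0_iff)
qed

definition next_idx :: "idx \<Rightarrow> idx" where
  "next_idx i = (case i of Ie \<Rightarrow> Ix | Ix \<Rightarrow> Iy | Iy \<Rightarrow> Ie)"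

text \<open>Cofactors via cyclic shifts of the indices, which absorbs the signs.\<close>

definition adjugate3 :: "(idx \<Rightarrow> idx \<Rightarrow> 'a::comm_ring_1) \<Rightarrow> idx \<Rightarrow> idx \<Rightarrow> 'a" where
  "adjugate3 g j k =
     g (next_idx k) (next_idx j) * g (next_idx (next_idx k)) (next_idx (next_idx j))
   - g (next_idx k) (next_idx (next_idx j)) * g (next_idx (next_idx k)) (next_idx j)"

definition det3 :: "(idx \<Rightarrow> idx \<Rightarrow> 'a::comm_ring_1) \<Rightarrow> 'a" where
  "det3 g = g Ie Ie * adjugate3 g Ie Ie + g Ie Ix * adjugate3 g Ix Ie + g Ie Iy * adjugate3 g Iy Ie"

lemma mat_mult_adjugate3:
  "(\<Sum>j\<in>UNIV. g i j * adjugate3 g j k) = (if i = k then det3 g else 0)"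
  by (cases i; cases k) (simp_all add: UNIV_idx_sum adjugate3_def det3_def next_idx_def algebra_simps)

lemma adjugate3_mat_mult:
  "(\<Sum>j\<in>UNIV. adjugate3 g i j * g j k) = (if i = k then det3 g else 0)"
  by (cases i; cases k) (simp_all add: UNIV_idx_sum adjugate3_def det3_def next_idx_def algebra_simps)

lemma det3_mat_mult:
  "det3 (\<lambda>i k. \<Sum>j\<in>UNIV. g i j * h j k) = det3 g * det3 (h :: idx \<Rightarrow> idx \<Rightarrow> 'a::comm_ring_1)"
  unfolding det3_def adjugate3_def next_idx_def UNIV_idx_sum by (simp add: algebra_simps)

lemma det3_one: "det3 (\<lambda>i k. if i = k then (1::'a::comm_ring_1) else 0) = 1"
  by (simp add: det3_def adjugate3_def next_idx_def)

lemma invertible_mat_iff_det3: "invertible_mat g \<longleftrightarrow> det3 g = 1"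
proof
  assume "invertible_mat g"
  then obtain h where "(\<lambda>i k. \<Sum>j\<in>UNIV. g i j * h j k) = (\<lambda>i k. if i = k then 1 else 0)"
    unfolding invertible_mat_def by blast
  then have "det3 g * det3 h = det3 (\<lambda>i k. if i = k then (1::bit) else 0)"
    by (simp only: det3_mat_mult [symmetric])
  then have "det3 g * det3 h = 1"
    by (simp only: det3_one)
  then show "det3 g = 1"
    by (metis bit.exhaust mult_zero_left zero_neq_one)
next
  assume "det3 g = 1"
  then show "invertible_mat g"
    unfolding invertible_mat_def
    by (intro exI[of _ "adjugate3 g"]) (simp add: mat_mult_adjugate3 adjugate3_mat_mult)
qed

definition sym_mat :: "bit \<Rightarrow> bit \<Rightarrow> bit \<Rightarrow> bit \<Rightarrow> bit \<Rightarrow> bit \<Rightarrow> idx \<Rightarrow> idx \<Rightarrow> bit" where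
  "sym_mat a b c d e f = (\<lambda>i j. case (i, j) of
       (Ie, Ie) \<Rightarrow> a | (Ie, Ix) \<Rightarrow> b | (Ix, Ie) \<Rightarrow> b | (Ie, Iy) \<Rightarrow> c | (Iy, Ie) \<Rightarrow> c
     | (Ix, Ix) \<Rightarrow> d | (Ix, Iy) \<Rightarrow> e | (Iy, Ix) \<Rightarrow> e | (Iy, Iy) \<Rightarrow> f)"

lemma symmetric_iff_sym_mat:
  "(\<forall>\<mu> \<nu>. g \<mu> \<nu> = g \<nu> \<mu>) \<longleftrightarrow> (\<exists>a b c d e f. g = sym_mat a b c d e f)"
proof
  assume symmetric: "\<forall>\<mu> \<nu>. g \<mu> \<nu> = g \<nu> \<mu>"
  have "g = sym_mat (g Ie Ie) (g Ie Ix) (g Ie Iy) (g Ix Ix) (g Ix Iy) (g Iy Iy)"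
    unfolding sym_mat_def fun_eq_iff all_idx_iff using symmetric by simp
  then show "\<exists>a b c d e f. g = sym_mat a b c d e f" by blast
next
  assume "\<exists>a b c d e f. g = sym_mat a b c d e f"
  then show "\<forall>\<mu> \<nu>. g \<mu> \<nu> = g \<nu> \<mu>"
    unfolding sym_mat_def all_idx_iff by auto
qed

lemma sym_mat_eq_iff:
  "sym_mat a b c d e f = sym_mat a' b' c' d' e' f' \<longleftrightarrow>
     a = a' \<and> b = b' \<and> c = c' \<and> d = d' \<and> e = e' \<and> f = f'"
  by (simp add: sym_mat_def fun_eq_iff all_idx_iff) blast

definition metric_params :: "sconst \<Rightarrow> bit \<Rightarrow> bit \<Rightarrow> bit \<Rightarrow> bit \<Rightarrow> bit \<Rightarrow> bit \<Rightarrow> bool" where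
  "metric_params V a b c d e f \<longleftrightarrow>
     det3 (sym_mat a b c d e f) = 1 \<and>
     (\<forall>\<rho> \<tau> \<sigma>. central_defect V (sym_mat a b c d e f) \<rho> \<tau> \<sigma> = 0)"

lemma quantum_metrics_eq:
  "{g. quantum_metric V g} = {sym_mat a b c d e f | a b c d e f. metric_params V a b c d e f}"
  unfolding quantum_metric_def symmetric_iff_sym_mat invertible_mat_iff_det3
    metric_tensor_central_iff metric_params_def
  by (auto; blast)

lemmas metric_params_unfold = metric_params_def all_idx_iff central_defect_def UNIV_idx_sum
  sym_mat_def det3_def adjugate3_def next_idx_def mkalg_def vec3_def delta_def

lemma metric_params_algA: "\<not> metric_params algA a b c d e f"
  by (cases a; cases b; cases c; cases d; cases e; cases f)
    (simp_all add: algA_def metric_params_unfold)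

lemma metric_params_algB:
  "metric_params algB a b c d e f \<longleftrightarrow> (a, b, c, d, e, f) = (1, 1, 1, 0, 1, 0)"
  by (cases a; cases b; cases c; cases d; cases e; cases f)
    (simp_all add: algB_def metric_params_unfold)

lemma metric_params_algC:
  "metric_params algC a b c d e f \<longleftrightarrow> (a, b, c, d, e) = (0, 0, 1, 1, 1)"
  by (cases a; cases b; cases c; cases d; cases e; cases f)
    (simp_all add: algC_def metric_params_unfold)

lemma metric_params_algD:
  "metric_params algD a b c d e f \<longleftrightarrow>
     (a, b, c) = (1, 1, 1) \<and> (d, e, f) \<in> {(1, 0, 0), (0, 1, 0), (0, 0, 1)}"
  by (cases a; cases b; cases c; cases d; cases e; cases f)
    (simp_all add: algD_def metric_params_unfold)

lemma metric_params_algE: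
  "metric_params algE a b c d e f \<longleftrightarrow> (a, b, c, d) = (0, 0, 1, 1)"
  by (cases a; cases b; cases c; cases d; cases e; cases f)
    (simp_all add: algE_def metric_params_unfold)

lemma metric_params_algF:
  "metric_params algF a b c d e f \<longleftrightarrow>
     (a, b, c, d, e, f) \<in> {(0, 0, 1, 1, 0, 0), (0, 1, 0, 1, 0, 1), (0, 1, 1, 0, 0, 1),
       (1, 0, 0, 0, 1, 1), (1, 0, 1, 1, 1, 1), (1, 1, 0, 1, 1, 0), (1, 1, 1, 0, 1, 0)}"
  by (cases a; cases b; cases c; cases d; cases e; cases f)
    (simp_all add: algF_def metric_params_unfold)

lemma quantum_metrics_algA: "{g. quantum_metric algA g} = {}"
  by (simp add: quantum_metrics_eq metric_params_algA)

lemma quantum_metrics_algB: "{g. quantum_metric algB g} = {sym_mat 1 1 1 0 1 0}"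
  by (simp add: quantum_metrics_eq metric_params_algB)

lemma quantum_metrics_algC:
  "{g. quantum_metric algC g} = {sym_mat 0 0 1 1 1 0, sym_mat 0 0 1 1 1 1}"
  by (simp add: quantum_metrics_eq metric_params_algC ex_bit_iff) blast

lemma quantum_metrics_algD:
  "{g. quantum_metric algD g} = {sym_mat 1 1 1 1 0 0, sym_mat 1 1 1 0 1 0, sym_mat 1 1 1 0 0 1}"
  by (simp add: quantum_metrics_eq metric_params_algD) blast

lemma quantum_metrics_algE:
  "{g. quantum_metric algE g} =
     {sym_mat 0 0 1 1 0 0, sym_mat 0 0 1 1 0 1, sym_mat 0 0 1 1 1 0, sym_mat 0 0 1 1 1 1}"
  by (simp add: quantum_metrics_eq metric_params_algE ex_bit_iff) blast

lemma quantum_metrics_algF: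
  "{g. quantum_metric algF g} =
     {sym_mat 0 0 1 1 0 0, sym_mat 0 1 0 1 0 1, sym_mat 0 1 1 0 0 1, sym_mat 1 0 0 0 1 1,
      sym_mat 1 0 1 1 1 1, sym_mat 1 1 0 1 1 0, sym_mat 1 1 1 0 1 0}"
  by (simp add: quantum_metrics_eq metric_params_algF) blast

lemmas sym_mat_dd_simps = fun_eq_iff all_idx_iff dd_def smul_def sym_mat_def

lemma quantum_metrics_algB_basis:
  "{g. quantum_metric algB g} =
     {dd Ie Ie + dd Ie Ix + dd Ix Ie + dd Ie Iy + dd Iy Ie + dd Ix Iy + dd Iy Ix}"
  by (simp add: quantum_metrics_algB sym_mat_dd_simps)

lemma quantum_metrics_algC_basis:
  "{g. quantum_metric algC g} =
     {dd Ie Iy + dd Iy Ie + dd Ix Ix + dd Ix Iy + dd Iy Ix + smul \<epsilon> (dd Iy Iy) | \<epsilon>. True}"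
  by (auto simp: quantum_metrics_algC sym_mat_dd_simps ex_bit_iff)

lemma quantum_metrics_algD_basis:
  "{g. quantum_metric algD g} =
     {dd Ie Ie + dd Ie Ix + dd Ix Ie + dd Ie Iy + dd Iy Ie + h | h.
        h \<in> {dd Ix Ix, dd Ix Iy + dd Iy Ix, dd Iy Iy}}"
proof -
  let ?base = "dd Ie Ie + dd Ie Ix + dd Ix Ie + dd Ie Iy + dd Iy Ie"
  have "?base + dd Ix Ix = sym_mat 1 1 1 1 0 0"
    and "?base + (dd Ix Iy + dd Iy Ix) = sym_mat 1 1 1 0 1 0"
    and "?base + dd Iy Iy = sym_mat 1 1 1 0 0 1"
    by (simp_all add: sym_mat_dd_simps)
  then show ?thesis
    unfolding Setcompr_eq_image by (simp add: quantum_metrics_algD)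
qed

lemma quantum_metrics_algE_basis:
  "{g. quantum_metric algE g} =
     {dd Ie Iy + dd Iy Ie + dd Ix Ix + smul \<epsilon>1 (dd Ix Iy + dd Iy Ix) + smul \<epsilon>2 (dd Iy Iy)
        | \<epsilon>1 \<epsilon>2. True}"
  by (auto simp: quantum_metrics_algE sym_mat_dd_simps ex_bit_iff)

theorem mainTheorem6:
  shows "card {g. quantum_metric algA g} = 0
       \<and> card {g. quantum_metric algB g} = 1
       \<and> card {g. quantum_metric algC g} = 2
       \<and> card {g. quantum_metric algD g} = 3
       \<and> card {g. quantum_metric algE g} = 4
       \<and> card {g. quantum_metric algF g} = 7
       \<and> {g. quantum_metric algB g} =
           {dd Ie Ie + dd Ie Ix + dd Ix Ie + dd Ie Iy + dd Iy Ie + dd Ix Iy + dd Iy Ix}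
       \<and> {g. quantum_metric algC g} =
           {dd Ie Iy + dd Iy Ie + dd Ix Ix + dd Ix Iy + dd Iy Ix + smul \<epsilon> (dd Iy Iy) | \<epsilon>. True}
       \<and> {g. quantum_metric algD g} =
           {dd Ie Ie + dd Ie Ix + dd Ix Ie + dd Ie Iy + dd Iy Ie + h | h.
              h \<in> {dd Ix Ix, dd Ix Iy + dd Iy Ix, dd Iy Iy}}
       \<and> {g. quantum_metric algE g} =
           {dd Ie Iy + dd Iy Ie + dd Ix Ix + smul \<epsilon>1 (dd Ix Iy + dd Iy Ix) + smul \<epsilon>2 (dd Iy Iy)
              | \<epsilon>1 \<epsilon>2. True}"
proof (intro conjI)
  show "card {g. quantum_metric algA g} = 0"
    and "card {g. quantum_metric algB g} = 1"
    and "card {g. quantum_metric algC g} = 2"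
    and "card {g. quantum_metric algD g} = 3"
    and "card {g. quantum_metric algE g} = 4"
    and "card {g. quantum_metric algF g} = 7"
    by (simp_all add: quantum_metrics_algA quantum_metrics_algB quantum_metrics_algC
        quantum_metrics_algD quantum_metrics_algE quantum_metrics_algF sym_mat_eq_iff)
qed (fact quantum_metrics_algB_basis quantum_metrics_algC_basis quantum_metrics_algD_basis
      quantum_metrics_algE_basis)+

end
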